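(* For every fixed $d>1$ there exists $L>0$ such that, with $p=d/n$, a.a.s. every set $S\subseteq V_n$ inducing a connected subgraph of $G_{n,p}$ with $|S|\ge\ln n$ satisfies $d(S)\le L|S|$.
   Context: $G_{n,p}$ is the random graph on $V_n=\{1,\dots,n\}$ with each possible edge present independently with probability $p$; a.a.s. means with probability tending to $1$; $d(S)=\sum_{v\in S}d(v)$ is the sum of the degrees in $G_{n,p}$ of the vertices of $S$. *)

theory Defs
  imports "HOL-Probability.Probability"
begin

text \<open>Vertex set V_n = {1..n}; a graph on V_n is the indicator function of its edge set,
  edges being 2-element subsets of V_n.\<close>

definition vpairs :: "nat \<Rightarrow> nat set set" where
  "vpairs n = {{u, v} | u v. u \<in> {1..n} \<and> v \<in> {1..n} \<and> u \<noteq> v}"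

definition gnp :: "nat \<Rightarrow> real \<Rightarrow> (nat set \<Rightarrow> bool) pmf" where
  "gnp n p = Pi_pmf (vpairs n) False (\<lambda>_. bernoulli_pmf p)"

definition adj :: "(nat set \<Rightarrow> bool) \<Rightarrow> nat \<Rightarrow> nat \<Rightarrow> bool" where
  "adj G u v \<longleftrightarrow> u \<noteq> v \<and> G {u, v}"

definition degree :: "nat \<Rightarrow> (nat set \<Rightarrow> bool) \<Rightarrow> nat \<Rightarrow> nat" where
  "degree n G v = card {u \<in> {1..n}. adj G u v}"

definition degsum :: "nat \<Rightarrow> (nat set \<Rightarrow> bool) \<Rightarrow> nat set \<Rightarrow> nat" where
  "degsum n G S = (\<Sum>v\<in>S. degree n G v)"

definition induces_connected :: "(nat set \<Rightarrow> bool) \<Rightarrow> nat set \<Rightarrow> bool" where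
  "induces_connected G S \<longleftrightarrow> S \<noteq> {} \<and>
     (\<forall>u\<in>S. \<forall>v\<in>S. (\<lambda>x y. x \<in> S \<and> y \<in> S \<and> adj G x y)\<^sup>*\<^sup>* u v)"

end

theory Submission
  imports Defs
begin

(* Fix an integer c >= e^2 d and let p = d/n. If S is connected, |S| = k and d(S) > 2(c+1)k,
   then more than (c+1)k present edges meet S. Together with a spanning tree of S, described by a
   parent map towards Min S, this yields k + ck - 1 present edges: the tree and ck further edges
   meeting S. The expected number of such edge sets is at most
     C(n,k) k^k C(kn,ck) p^(k+ck-1) <= n (e d (e d / c)^c)^k <= n e^(-3k),
   which is at most n^(-2) once k >= ln n; a union bound over k <= n gives failure probability
   at most 1/n. *)

lemma pow_div_fact_le_exp:
  fixes x :: real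
  assumes "0 \<le> x"
  shows "x ^ m / fact m \<le> exp x"
proof -
  have "(\<lambda>k. x ^ k / fact k) sums exp x"
    using exp_converges[of x] by (simp add: field_simps)
  then show ?thesis
    using sum_le_suminf[of "\<lambda>k. x ^ k / fact k" "{m}"] assms by (simp add: sums_iff)
qed

lemma binomial_le_exp_mult_div_pow: "real (N choose m) \<le> (exp 1 * real N / real m) ^ m"
proof (cases "m = 0")
  case False
  have "real (N choose m) * fact m \<le> real N ^ m"
    by (metis binomial_fact_pow of_nat_fact of_nat_le_iff of_nat_mult of_nat_power)
  then have "real (N choose m) \<le> real N ^ m / fact m"
    by (simp add: field_simps)
  also have "\<dots> = (real N / real m) ^ m * (real m ^ m / fact m)"
    using False by (simp add: power_divide)
  also have "\<dots> \<le> (real N / real m) ^ m * exp 1 ^ m"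
    using pow_div_fact_le_exp[of "real m" m] by (intro mult_left_mono) (auto simp flip: exp_of_nat_mult)
  finally show ?thesis by (simp add: power_mult_distrib power_divide mult.commute)
qed simp

lemma exp_mult_pow_le_exp_minus_3:
  fixes d :: real and c :: nat
  assumes d: "1 \<le> d" and c: "exp 2 * d \<le> real c"
  shows "exp 1 * d * (exp 1 * d / real c) ^ c \<le> exp (-3)"
proof -
  have "exp (2::real) \<ge> 4"
    using exp_ge_add_one_self[of "1::real"] mult_mono[of 2 "exp 1" 2 "exp (1::real)"]
    by (simp add: exp_add[symmetric])
  then have "4 * d \<le> exp 2 * d"
    using d by (intro mult_right_mono) auto
  then have c4: "4 * d \<le> real c"
    using c by linarith
  have "exp 1 * d / real c \<le> exp (-1)"
    using c c4 d by (simp add: divide_le_eq exp_minus field_simps exp_add[symmetric])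
  then have "(exp 1 * d / real c) ^ c \<le> exp (-1) ^ c"
    using d by (intro power_mono) auto
  also have "\<dots> = exp (- real c)"
    by (simp flip: exp_of_nat_mult)
  finally have "exp 1 * d * (exp 1 * d / real c) ^ c \<le> exp 1 * d * exp (- real c)"
    using d by (intro mult_left_mono) auto
  also have "\<dots> = exp (1 + ln d - real c)"
    using d by (simp add: exp_add exp_diff exp_minus divide_inverse)
  also have "\<dots> \<le> exp (-3)"
    using ln_le_minus_one[of d] d c4 by simp
  finally show ?thesis .
qed

lemma witness_first_moment_le:
  fixes n k c N :: nat and d :: real
  assumes n: "n \<ge> 1" and k: "k \<ge> 1" and d: "d \<ge> 1" and N: "N \<le> k * n"
  shows "real (n choose k) * real k ^ k * real (N choose (c * k)) * (d / real n) ^ (k + c * k - 1)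
     \<le> real n * (exp 1 * d * (exp 1 * d / real c) ^ c) ^ k"
proof -
  have vertices: "real (n choose k) * real k ^ k \<le> (exp 1 * real n) ^ k"
  proof -
    have "real (n choose k) * real k ^ k \<le> (exp 1 * real n / real k) ^ k * real k ^ k"
      by (intro mult_right_mono binomial_le_exp_mult_div_pow) auto
    also have "\<dots> = (exp 1 * real n) ^ k"
      using k by (simp add: power_mult_distrib[symmetric])
    finally show ?thesis .
  qed
  have extra_edges: "real (N choose (c * k)) \<le> (exp 1 * real n / real c) ^ (c * k)"
  proof (cases "c = 0")
    case False
    have "real (N choose (c * k)) \<le> (exp 1 * real N / real (c * k)) ^ (c * k)"
      by (rule binomial_le_exp_mult_div_pow)
    also have "exp 1 * real N / real (c * k) \<le> exp 1 * real n / real c"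
    proof -
      have "real N \<le> real k * real n"
        using N by (metis of_nat_le_iff of_nat_mult)
      then show ?thesis
        using k False by (simp add: field_simps)
    qed
    then have "(exp 1 * real N / real (c * k)) ^ (c * k) \<le> (exp 1 * real n / real c) ^ (c * k)"
      by (intro power_mono) auto
    finally show ?thesis .
  qed simp
  have edge_prob: "(d / real n) ^ (k + c * k - 1) \<le> real n * (d / real n) ^ (k + c * k)"
  proof -
    have "(d / real n) ^ (k + c * k) = d / real n * (d / real n) ^ (k + c * k - 1)"
      using k by (simp flip: power_Suc)
    then have "real n * (d / real n) ^ (k + c * k) = d * (d / real n) ^ (k + c * k - 1)"
      using n by simp
    moreover have "1 * (d / real n) ^ (k + c * k - 1) \<le> d * (d / real n) ^ (k + c * k - 1)"
      using d by (intro mult_right_mono) auto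
    ultimately show ?thesis by simp
  qed
  have "real (n choose k) * real k ^ k * real (N choose (c * k)) * (d / real n) ^ (k + c * k - 1)
      \<le> (exp 1 * real n) ^ k * (exp 1 * real n / real c) ^ (c * k) * (real n * (d / real n) ^ (k + c * k))"
    using vertices extra_edges edge_prob d by (intro mult_mono) auto
  also have "\<dots> = real n * (exp 1 * d * (exp 1 * d / real c) ^ c) ^ k"
  proof -
    have "(exp 1 * real n) ^ k * (d / real n) ^ k = (exp 1 * d) ^ k"
      using n by (simp flip: power_mult_distrib)
    moreover have "(exp 1 * real n / real c) ^ (c * k) * (d / real n) ^ (c * k) = (exp 1 * d / real c) ^ (c * k)"
      using n by (simp flip: power_mult_distrib)
    ultimately show ?thesis
      by (simp add: power_add power_mult power_mult_distrib mult_ac)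
  qed
  finally show ?thesis .
qed

lemma finite_vpairs: "finite (vpairs n)"
proof -
  have "vpairs n \<subseteq> (\<lambda>(u, v). {u, v}) ` ({1..n} \<times> {1..n})"
    by (auto simp: vpairs_def)
  then show ?thesis
    by (rule finite_subset) auto
qed

definition incident_pairs :: "nat \<Rightarrow> nat set \<Rightarrow> nat set set" where
  "incident_pairs n S = {e \<in> vpairs n. e \<inter> S \<noteq> {}}"

lemma card_incident_pairs_le:
  assumes "finite S"
  shows "card (incident_pairs n S) \<le> card S * n"
proof -
  have "incident_pairs n S \<subseteq> (\<lambda>(v, u). {v, u}) ` (S \<times> {1..n})"
    by (auto simp: incident_pairs_def vpairs_def insert_commute)
  then have "card (incident_pairs n S) \<le> card ((\<lambda>(v, u). {v, u}) ` (S \<times> {1..n}))"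
    using assms by (intro card_mono) auto
  also have "\<dots> \<le> card (S \<times> {1..n})"
    by (rule card_image_le) (simp add: assms)
  finally show ?thesis
    by (simp add: card_cartesian_product)
qed

lemma degree_eq_card_present_pairs:
  assumes v: "v \<in> {1..n}"
  shows "degree n G v = card {e \<in> vpairs n. G e \<and> v \<in> e}"
proof -
  have "bij_betw (\<lambda>u. {u, v}) {u \<in> {1..n}. adj G u v} {e \<in> vpairs n. G e \<and> v \<in> e}"
  proof (rule bij_betw_imageI)
    show "inj_on (\<lambda>u. {u, v}) {u \<in> {1..n}. adj G u v}"
      by (rule inj_onI) (auto simp: doubleton_eq_iff)
    show "(\<lambda>u. {u, v}) ` {u \<in> {1..n}. adj G u v} = {e \<in> vpairs n. G e \<and> v \<in> e}"
      using v by (auto simp: vpairs_def adj_def image_iff insert_commute)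
  qed
  then show ?thesis
    unfolding degree_def by (rule bij_betw_same_card)
qed

lemma degsum_le_twice_card_present_incident:
  assumes S: "S \<subseteq> {1..n}"
  shows "degsum n G S \<le> 2 * card {e \<in> incident_pairs n S. G e}"
proof -
  define E where "E = {e \<in> incident_pairs n S. G e}"
  have "finite E"
    using finite_vpairs by (simp add: E_def incident_pairs_def)
  have "finite S"
    using S finite_subset by blast
  have "degsum n G S = (\<Sum>v\<in>S. card {e \<in> E. v \<in> e})"
    unfolding degsum_def
  proof (rule sum.cong[OF refl])
    fix v assume "v \<in> S"
    then have "{e \<in> vpairs n. G e \<and> v \<in> e} = {e \<in> E. v \<in> e}" and "v \<in> {1..n}"
      using S by (auto simp: E_def incident_pairs_def)
    then show "degree n G v = card {e \<in> E. v \<in> e}"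
      by (simp add: degree_eq_card_present_pairs)
  qed
  also have "\<dots> = (\<Sum>v\<in>S. \<Sum>e\<in>E. if v \<in> e then 1 else 0)"
    using \<open>finite E\<close> by (simp add: sum.If_cases Int_def conj_commute)
  also have "\<dots> = (\<Sum>e\<in>E. \<Sum>v\<in>S. if v \<in> e then 1 else 0)"
    by (rule sum.swap)
  also have "\<dots> = (\<Sum>e\<in>E. card (S \<inter> e))"
    using \<open>finite S\<close> by (simp add: sum.If_cases Int_def)
  also have "\<dots> \<le> (\<Sum>e\<in>E. 2)"
  proof (rule sum_mono)
    fix e assume "e \<in> E"
    then obtain u v where "e = {u, v}"
      by (auto simp: E_def incident_pairs_def vpairs_def)
    then have "card (S \<inter> e) \<le> card e"
      by (intro card_mono) auto
    also have "\<dots> \<le> 2"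
      using \<open>e = {u, v}\<close> by (simp add: card_insert_if)
    finally show "card (S \<inter> e) \<le> 2" .
  qed
  finally show ?thesis
    by (simp add: E_def mult.commute)
qed

lemma rtranclp_obtains_closer_predecessor:
  assumes "R\<^sup>*\<^sup>* r v" "v \<noteq> r"
  obtains u where "R u v" "(LEAST j. (R ^^ j) r u) < (LEAST j. (R ^^ j) r v)"
proof -
  define dist where "dist x = (LEAST j. (R ^^ j) r x)" for x
  have path: "(R ^^ dist v) r v"
    unfolding dist_def by (rule LeastI_ex) (use assms(1) in \<open>simp add: rtranclp_power\<close>)
  have "dist v \<noteq> 0"
  proof
    assume "dist v = 0"
    with path assms(2) show False
      by simp
  qed
  then obtain j where j: "dist v = Suc j"
    using not0_implies_Suc by blast
  with path have "(R ^^ j OO R) r v"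
    by simp
  then obtain u where "(R ^^ j) r u" "R u v"
    by blast
  moreover have "dist u \<le> j"
    unfolding dist_def by (rule Least_le) fact
  ultimately show ?thesis
    using that j unfolding dist_def by simp
qed

lemma induces_connected_obtains_parent_map:
  assumes conn: "induces_connected G S" and r: "r \<in> S"
  obtains g where "g \<in> S - {r} \<rightarrow>\<^sub>E S" "\<And>v. v \<in> S - {r} \<Longrightarrow> adj G v (g v)"
    "inj_on (\<lambda>v. {v, g v}) (S - {r})"
proof -
  define R where "R x y \<longleftrightarrow> x \<in> S \<and> y \<in> S \<and> adj G x y" for x y
  define dist where "dist x = (LEAST j. (R ^^ j) r x)" for x
  have "\<exists>u. R u v \<and> dist u < dist v" if "v \<in> S - {r}" for v
    using conn r that rtranclp_obtains_closer_predecessor[of R r v]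
    unfolding induces_connected_def R_def dist_def by blast
  then obtain parent where parent: "R (parent v) v" "dist (parent v) < dist v" if "v \<in> S - {r}" for v
    by metis
  show ?thesis
  proof
    show "restrict parent (S - {r}) \<in> S - {r} \<rightarrow>\<^sub>E S"
      using parent(1) by (auto simp: R_def)
    show "adj G v (restrict parent (S - {r}) v)" if "v \<in> S - {r}" for v
      using that parent(1)[OF that] by (simp add: R_def adj_def insert_commute)
    show "inj_on (\<lambda>v. {v, restrict parent (S - {r}) v}) (S - {r})"
    proof (rule inj_onI)
      fix v w assume v: "v \<in> S - {r}" and w: "w \<in> S - {r}"
        and "{v, restrict parent (S - {r}) v} = {w, restrict parent (S - {r}) w}"
      then have "{v, parent v} = {w, parent w}"
        by simp
      then have "v = w \<or> (v = parent w \<and> w = parent v)"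
        by (metis doubleton_eq_iff)
      moreover have "\<not> (v = parent w \<and> w = parent v)"
        using parent(2)[OF v] parent(2)[OF w] by (metis less_asym)
      ultimately show "v = w"
        by blast
    qed
  qed
qed

definition parent_edges :: "nat set \<Rightarrow> (nat \<Rightarrow> nat) \<Rightarrow> nat set set" where
  "parent_edges S g = (\<lambda>v. {v, g v}) ` (S - {Min S})"

definition witness_edge_sets :: "nat \<Rightarrow> nat \<Rightarrow> nat \<Rightarrow> nat set set set" where
  "witness_edge_sets n c k = {F. F \<subseteq> vpairs n \<and> card F = k + c * k - 1 \<and>
     (\<exists>S g M. S \<subseteq> {1..n} \<and> card S = k \<and> g \<in> S - {Min S} \<rightarrow>\<^sub>E S \<and>
        M \<subseteq> incident_pairs n S \<and> card M = c * k \<and> F = parent_edges S g \<union> M)}"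

lemma card_witness_edge_sets_le:
  "card (witness_edge_sets n c k) \<le> (n choose k) * k ^ k * ((k * n) choose (c * k))"
proof -
  define Ss where "Ss = {S. S \<subseteq> {1..n} \<and> card S = k}"
  define Ms where "Ms S = {M. M \<subseteq> incident_pairs n S \<and> card M = c * k}" for S
  define X where "X = (SIGMA S:Ss. (S - {Min S} \<rightarrow>\<^sub>E S) \<times> Ms S)"
  have fin_Ss: "finite Ss"
    unfolding Ss_def by (rule finite_subset[of _ "Pow {1..n}"]) auto
  have fin_S: "finite S" if "S \<in> Ss" for S
    using that finite_subset by (auto simp: Ss_def)
  have fin_Ms: "finite (Ms S)" for S
    using finite_vpairs by (simp add: Ms_def incident_pairs_def)
  have fin_X: "finite X"
    unfolding X_def using fin_Ss fin_S fin_Ms by (intro finite_SigmaI finite_cartesian_product finite_PiE) auto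
  have "witness_edge_sets n c k \<subseteq> (\<lambda>(S, g, M). parent_edges S g \<union> M) ` X"
    unfolding witness_edge_sets_def X_def Ss_def Ms_def by (auto simp: image_iff)
  then have "card (witness_edge_sets n c k) \<le> card ((\<lambda>(S, g, M). parent_edges S g \<union> M) ` X)"
    using fin_X by (intro card_mono finite_imageI)
  also have "\<dots> \<le> card X"
    using fin_X by (rule card_image_le)
  also have "card X = (\<Sum>S\<in>Ss. card (S - {Min S} \<rightarrow>\<^sub>E S) * card (Ms S))"
    unfolding X_def using fin_Ss fin_S fin_Ms by (simp add: card_SigmaI card_cartesian_product finite_PiE)
  also have "\<dots> \<le> (\<Sum>S\<in>Ss. k ^ k * ((k * n) choose (c * k)))"
  proof (rule sum_mono)
    fix S assume S: "S \<in> Ss"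
    have "card (S - {Min S} \<rightarrow>\<^sub>E S) = k ^ card (S - {Min S})"
      using S fin_S[OF S] by (simp add: card_PiE Ss_def)
    also have "\<dots> \<le> k ^ k"
      using S fin_S[OF S] by (cases "k = 0") (auto simp: Ss_def intro: power_increasing card_Diff1_le)
    finally have "card (S - {Min S} \<rightarrow>\<^sub>E S) \<le> k ^ k" .
    moreover have "card (Ms S) = card (incident_pairs n S) choose (c * k)"
      unfolding Ms_def by (rule n_subsets) (simp add: finite_vpairs incident_pairs_def)
    moreover have "card (incident_pairs n S) \<le> k * n"
      using card_incident_pairs_le[OF fin_S[OF S], of n] S by (simp add: Ss_def)
    ultimately show "card (S - {Min S} \<rightarrow>\<^sub>E S) * card (Ms S) \<le> k ^ k * ((k * n) choose (c * k))"
      by (simp add: binomial_right_mono mult_le_mono)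
  qed
  also have "\<dots> = (n choose k) * k ^ k * ((k * n) choose (c * k))"
    by (simp add: Ss_def n_subsets)
  finally show ?thesis .
qed

lemma heavy_connected_set_contains_witness:
  assumes S: "S \<subseteq> {1..n}" and conn: "induces_connected G S"
    and heavy: "2 * (c + 1) * card S < degsum n G S"
  shows "\<exists>F \<in> witness_edge_sets n c (card S). \<forall>e\<in>F. G e"
proof -
  define k where "k = card S"
  define r where "r = Min S"
  define E where "E = {e \<in> incident_pairs n S. G e}"
  have "finite S"
    using S finite_subset by blast
  moreover have "S \<noteq> {}"
    using conn by (simp add: induces_connected_def)
  ultimately have r: "r \<in> S" and k: "k \<ge> 1"
    by (simp_all add: r_def k_def Suc_le_eq card_gt_0_iff)
  obtain g where g: "g \<in> S - {r} \<rightarrow>\<^sub>E S" and adj: "\<And>v. v \<in> S - {r} \<Longrightarrow> adj G v (g v)"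
    and inj: "inj_on (\<lambda>v. {v, g v}) (S - {r})"
    using induces_connected_obtains_parent_map[OF conn r] by blast
  define T where "T = parent_edges S g"
  have card_T: "card T = k - 1"
    using inj \<open>finite S\<close> r by (simp add: T_def parent_edges_def r_def[symmetric] card_image k_def)
  have "finite E"
    using finite_vpairs by (simp add: E_def incident_pairs_def)
  have T_E: "T \<subseteq> E"
  proof
    fix e assume "e \<in> T"
    then obtain v where v: "v \<in> S - {r}" and e: "e = {v, g v}"
      by (auto simp: T_def parent_edges_def r_def)
    then have "g v \<in> S" "v \<noteq> g v" "G {v, g v}"
      using g adj[OF v] by (auto simp: adj_def)
    then have "{v, g v} \<in> vpairs n"
      using v S unfolding vpairs_def by blast
    then show "e \<in> E"
      using v e \<open>G {v, g v}\<close> by (auto simp: E_def incident_pairs_def)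
  qed
  have "2 * (c + 1) * k < 2 * card E"
    using heavy degsum_le_twice_card_present_incident[OF S, of G] by (simp add: k_def E_def)
  then have "c * k \<le> card (E - T)"
    using T_E \<open>finite E\<close> card_T k by (simp add: card_Diff_subset finite_subset)
  then obtain M where M: "M \<subseteq> E - T" "card M = c * k"
    by (meson obtain_subset_with_card_n)
  have "finite T" "finite M"
    using T_E M \<open>finite E\<close> finite_subset by blast+
  then have "card (T \<union> M) = k + c * k - 1"
    using M card_T k by (subst card_Un_disjoint) auto
  moreover have "T \<union> M \<subseteq> E"
    using T_E M by blast
  ultimately have "T \<union> M \<in> witness_edge_sets n c k"
    using S g M unfolding witness_edge_sets_def
    by (auto simp: E_def incident_pairs_def k_def T_def r_def intro!: exI[of _ S] exI[of _ g] exI[of _ M])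
  moreover have "\<forall>e \<in> T \<union> M. G e"
    using \<open>T \<union> M \<subseteq> E\<close> by (auto simp: E_def)
  ultimately show ?thesis
    by (auto simp: k_def)
qed

lemma prob_gnp_all_present:
  assumes F: "F \<subseteq> vpairs n" and p: "0 \<le> p" "p \<le> 1"
  shows "measure_pmf.prob (gnp n p) {G. \<forall>e\<in>F. G e} = p ^ card F"
proof -
  have "{G. \<forall>e\<in>F. G e} = Pi (vpairs n) (\<lambda>e. if e \<in> F then {True} else UNIV)"
    using F by (auto simp: Pi_def)
  then have "measure_pmf.prob (gnp n p) {G. \<forall>e\<in>F. G e}
      = (\<Prod>e\<in>vpairs n. measure_pmf.prob (bernoulli_pmf p) (if e \<in> F then {True} else UNIV))"
    unfolding gnp_def using finite_vpairs by (simp add: measure_Pi_pmf_Pi)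
  also have "\<dots> = (\<Prod>e\<in>vpairs n. if e \<in> F then p else 1)"
    by (rule prod.cong) (auto simp: measure_pmf_single p)
  also have "\<dots> = p ^ card F"
    using F finite_vpairs by (simp add: prod.If_cases Int_absorb1)
  finally show ?thesis .
qed

lemma prob_gnp_some_all_present_le:
  assumes "finite I" and F: "\<And>i. i \<in> I \<Longrightarrow> F i \<subseteq> vpairs n" and p: "0 \<le> p" "p \<le> 1"
  shows "measure_pmf.prob (gnp n p) {G. \<exists>i\<in>I. \<forall>e\<in>F i. G e} \<le> (\<Sum>i\<in>I. p ^ card (F i))"
proof -
  have "{G. \<exists>i\<in>I. \<forall>e\<in>F i. G e} = (\<Union>i\<in>I. {G. \<forall>e\<in>F i. G e})"
    by blast
  then have "measure_pmf.prob (gnp n p) {G. \<exists>i\<in>I. \<forall>e\<in>F i. G e}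
      \<le> (\<Sum>i\<in>I. measure_pmf.prob (gnp n p) {G. \<forall>e\<in>F i. G e})"
    using \<open>finite I\<close> by (simp add: measure_pmf.finite_measure_subadditive_finite)
  also have "\<dots> = (\<Sum>i\<in>I. p ^ card (F i))"
    using F p by (simp add: prob_gnp_all_present)
  finally show ?thesis .
qed

lemma card_witness_edge_sets_mult_pow_le:
  fixes d :: real and n c k :: nat
  assumes d: "1 \<le> d" and c: "exp 2 * d \<le> real c" and n: "d \<le> real n"
    and k: "1 \<le> k" "ln (real n) \<le> real k"
  shows "real (card (witness_edge_sets n c k)) * (d / real n) ^ (k + c * k - 1) \<le> 1 / real n ^ 2"
proof -
  have "n \<ge> 1"
    using d n by linarith
  then have "real n > 0"
    by simp
  have "real (card (witness_edge_sets n c k)) * (d / real n) ^ (k + c * k - 1)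
      \<le> real (n choose k) * real k ^ k * real ((k * n) choose (c * k)) * (d / real n) ^ (k + c * k - 1)"
    using card_witness_edge_sets_le[of n c k] d \<open>real n > 0\<close>
    by (intro mult_right_mono) (auto simp flip: of_nat_mult of_nat_power intro: of_nat_mono)
  also have "\<dots> \<le> real n * (exp 1 * d * (exp 1 * d / real c) ^ c) ^ k"
    using \<open>n \<ge> 1\<close> k d by (intro witness_first_moment_le) auto
  also have "\<dots> \<le> real n * exp (-3) ^ k"
    using exp_mult_pow_le_exp_minus_3[OF d c] d c \<open>real n > 0\<close>
    by (intro mult_left_mono power_mono) auto
  also have "\<dots> = real n * exp (- 3 * real k)"
    by (simp add: mult.commute flip: exp_of_nat_mult)
  also have "\<dots> \<le> real n * exp (- 3 * ln (real n))"
    using k \<open>real n > 0\<close> by (intro mult_left_mono) auto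
  also have "\<dots> = 1 / real n ^ 2"
  proof -
    have "exp (3 * ln (real n)) = real n ^ 3"
      using exp_of_nat_mult[of 3 "ln (real n)"] \<open>real n > 0\<close> by simp
    then show ?thesis
      using \<open>real n > 0\<close> by (simp add: exp_minus field_simps power3_eq_cube power2_eq_square)
  qed
  finally show ?thesis .
qed

lemma finite_witness_edge_sets: "finite (witness_edge_sets n c k)"
  using finite_vpairs
  by (rule finite_subset[rotated, OF finite_Pow_iff[THEN iffD2]]) (auto simp: witness_edge_sets_def)

lemma prob_some_witness_present_le:
  assumes "finite K" and p: "0 \<le> p" "p \<le> 1"
  shows "measure_pmf.prob (gnp n p) {G. \<exists>k\<in>K. \<exists>F\<in>witness_edge_sets n c k. \<forall>e\<in>F. G e}
           \<le> (\<Sum>k\<in>K. real (card (witness_edge_sets n c k)) * p ^ (k + c * k - 1))"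
proof -
  have "{G. \<exists>k\<in>K. \<exists>F\<in>witness_edge_sets n c k. \<forall>e\<in>F. G e}
      = {G. \<exists>kF \<in> Sigma K (witness_edge_sets n c). \<forall>e\<in>snd kF. G e}"
    by auto
  then have "measure_pmf.prob (gnp n p) {G. \<exists>k\<in>K. \<exists>F\<in>witness_edge_sets n c k. \<forall>e\<in>F. G e}
      \<le> (\<Sum>kF \<in> Sigma K (witness_edge_sets n c). p ^ card (snd kF))"
    using p by (simp only:) (intro prob_gnp_some_all_present_le,
      auto simp: witness_edge_sets_def intro: finite_SigmaI \<open>finite K\<close> finite_witness_edge_sets)
  also have "\<dots> = (\<Sum>k\<in>K. \<Sum>F\<in>witness_edge_sets n c k. p ^ card F)"
    by (simp add: split_beta sum.Sigma \<open>finite K\<close> finite_witness_edge_sets)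
  also have "\<dots> = (\<Sum>k\<in>K. real (card (witness_edge_sets n c k)) * p ^ (k + c * k - 1))"
    by (intro sum.cong refl) (simp add: witness_edge_sets_def)
  finally show ?thesis .
qed

lemma prob_heavy_connected_set_le:
  fixes d :: real and c n :: nat
  assumes d: "1 \<le> d" and c: "exp 2 * d \<le> real c" and n: "d \<le> real n"
  shows "measure_pmf.prob (gnp n (d / real n))
           {G. \<exists>S\<subseteq>{1..n}. induces_connected G S \<and> ln (real n) \<le> real (card S)
                \<and> 2 * (c + 1) * card S < degsum n G S} \<le> 1 / real n"
proof -
  define K where "K = {k \<in> {1..n}. ln (real n) \<le> real k}"
  have "real n > 0"
    using d n by linarith
  have "{G. \<exists>S\<subseteq>{1..n}. induces_connected G S \<and> ln (real n) \<le> real (card S)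
                \<and> 2 * (c + 1) * card S < degsum n G S}
      \<subseteq> {G. \<exists>k\<in>K. \<exists>F\<in>witness_edge_sets n c k. \<forall>e\<in>F. G e}"
  proof safe
    fix G S assume S: "S \<subseteq> {1..n}" "induces_connected G S" "ln (real n) \<le> real (card S)"
      "2 * (c + 1) * card S < degsum n G S"
    then have "card S \<in> K"
      using card_mono[OF _ S(1)] by (auto simp: K_def induces_connected_def Suc_le_eq card_gt_0_iff finite_subset)
    then show "\<exists>k\<in>K. \<exists>F\<in>witness_edge_sets n c k. \<forall>e\<in>F. G e"
      using heavy_connected_set_contains_witness[OF S(1,2,4)] by blast
  qed
  then have "measure_pmf.prob (gnp n (d / real n)) {G. \<exists>S\<subseteq>{1..n}. induces_connected G S
                \<and> ln (real n) \<le> real (card S) \<and> 2 * (c + 1) * card S < degsum n G S}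
      \<le> measure_pmf.prob (gnp n (d / real n)) {G. \<exists>k\<in>K. \<exists>F\<in>witness_edge_sets n c k. \<forall>e\<in>F. G e}"
    by (intro measure_pmf.finite_measure_mono) auto
  also have "\<dots> \<le> (\<Sum>k\<in>K. real (card (witness_edge_sets n c k)) * (d / real n) ^ (k + c * k - 1))"
    using d n \<open>real n > 0\<close> by (intro prob_some_witness_present_le) (auto simp: K_def)
  also have "\<dots> \<le> (\<Sum>k\<in>K. 1 / real n ^ 2)"
    using d c n by (intro sum_mono card_witness_edge_sets_mult_pow_le) (auto simp: K_def)
  also have "\<dots> \<le> real n * (1 / real n ^ 2)"
  proof -
    have "card K \<le> card {1..n}"
      by (rule card_mono) (auto simp: K_def)
    then show ?thesis
      by (simp add: divide_right_mono)
  qed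
  also have "\<dots> = 1 / real n"
    using \<open>real n > 0\<close> by (simp add: power2_eq_square)
  finally show ?thesis .
qed

lemma prob_no_heavy_connected_set_ge:
  fixes d :: real and c n :: nat
  assumes "1 \<le> d" and "exp 2 * d \<le> real c" and "d \<le> real n"
  shows "1 - 1 / real n \<le> measure_pmf.prob (gnp n (d / real n))
           {G. \<forall>S. S \<subseteq> {1..n} \<and> induces_connected G S \<and> real (card S) \<ge> ln (real n)
                   \<longrightarrow> real (degsum n G S) \<le> real (2 * (c + 1)) * real (card S)}"
proof -
  let ?heavy = "{G. \<exists>S\<subseteq>{1..n}. induces_connected G S \<and> ln (real n) \<le> real (card S)
                      \<and> 2 * (c + 1) * card S < degsum n G S}"
  have "{G. \<forall>S. S \<subseteq> {1..n} \<and> induces_connected G S \<and> real (card S) \<ge> ln (real n)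
                 \<longrightarrow> real (degsum n G S) \<le> real (2 * (c + 1)) * real (card S)}
      = space (measure_pmf (gnp n (d / real n))) - ?heavy"
    by (auto simp only: of_nat_mult[symmetric] of_nat_le_iff not_less space_measure_pmf)
  then have "measure_pmf.prob (gnp n (d / real n))
           {G. \<forall>S. S \<subseteq> {1..n} \<and> induces_connected G S \<and> real (card S) \<ge> ln (real n)
                   \<longrightarrow> real (degsum n G S) \<le> real (2 * (c + 1)) * real (card S)}
      = 1 - measure_pmf.prob (gnp n (d / real n)) ?heavy"
    by (simp only:) (rule measure_pmf.prob_compl, simp)
  moreover have "measure_pmf.prob (gnp n (d / real n)) ?heavy \<le> 1 / real n"
    using assms by (rule prob_heavy_connected_set_le)
  ultimately show ?thesis
    by linarith
qed

theorem lemma8: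
  fixes d :: real
  assumes "d > 1"
  shows "\<exists>L > 0. (\<lambda>n. measure_pmf.prob (gnp n (d / real n))
            {G. \<forall>S. S \<subseteq> {1..n} \<and> induces_connected G S \<and> real (card S) \<ge> ln (real n)
                   \<longrightarrow> real (degsum n G S) \<le> L * real (card S)}) \<longlonglongrightarrow> 1"
proof -
  define c where "c = nat \<lceil>exp 2 * d\<rceil>"
  define P where "P n = measure_pmf.prob (gnp n (d / real n))
            {G. \<forall>S. S \<subseteq> {1..n} \<and> induces_connected G S \<and> real (card S) \<ge> ln (real n)
                   \<longrightarrow> real (degsum n G S) \<le> real (2 * (c + 1)) * real (card S)}" for n
  obtain N :: nat where "d \<le> real N"
    using real_arch_simple by blast
  then have "\<forall>\<^sub>F n in sequentially. 1 - 1 / real n \<le> P n"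
    using assms real_nat_ceiling_ge[of "exp 2 * d"] unfolding P_def c_def
    by (intro eventually_sequentiallyI[of N] prob_no_heavy_connected_set_ge) auto
  moreover have "\<forall>\<^sub>F n in sequentially. P n \<le> 1"
    by (simp add: P_def)
  moreover have "(\<lambda>n. 1 - 1 / real n) \<longlonglongrightarrow> 1"
    using tendsto_diff[OF tendsto_const lim_1_over_n, of "1::real"] by simp
  ultimately have "P \<longlonglongrightarrow> 1"
    by (rule tendsto_sandwich[OF _ _ _ tendsto_const])
  then show ?thesis
    unfolding P_def by (intro exI[of _ "real (2 * (c + 1))"] conjI) simp_all
qed

end
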